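(* Let the MT pdf at time $t-1$ be a mixture over $n$-target hypotheses $q^{(n)}$, $$p_{t-1}(X,n)=\sum_{q^{(n)}}\omega^{q^{(n)}}_{t-1}\sum_\nu\prod_{i=1}^n p^{q^{(n)},i}_{t-1}(x_{\nu_i}),$$ and suppose no birth or death. Then (i) the predicted MT pdf $p_t^-(X,n)=\frac1{n!}\int p(X,n\mid X',n)p_{t-1}(X',n)dX'$ is $$p_t^-(X,n)=\sum_{q^{(n)}}\omega^{q^{(n)}}_{t-1}\sum_\nu\prod_{i}p_t^{q^{(n)},i-}(x_{\nu_i}),\qquad p_t^{q^{(n)},i-}(x)=\int p(x\mid x')p^{q^{(n)},i}_{t-1}(x')dx';$$ and (ii) given measurements $Z_t=\{z^t_1,\dots,z^t_m\}$, the Bayes-updated MT pdf $p_t(X,n\mid Z_t)=\frac{p(Z_t\mid X,n)p_t^-(X,n)}{\sum_q\frac1{q!}\int p(Z_t\mid X',q)p_t^-(X',q)dX'}$ equals $$p_t(X,n\mid Z_t)=\sum_{q^{(n)}}\sum_{\sigma^{(n)}}\omega_t^{q^{(n)}\sigma^{(n)}}\sum_\nu\prod_i p_t^{q^{(n)}\sigma^{(n)},i}\big(x_{\nu_i}\mid z^t_{\sigma^{(n)}_i}\big),$$ where $$p_t^{q^{(n)}\sigma^{(n)},i}(x\mid z)=\frac{p(z\mid x)\,p_t^{q^{(n)},i-}(x)}{\int p(z\mid x')\,p_t^{q^{(n)},i-}(x')dx'},$$ $$\omega_t^{q^{(n)}\sigma^{(n)}}=\frac{\omega^{q^{(n)}}_{t-1}\,p(\sigma^{(n)}\mid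 n)\,l_{q^{(n)}\sigma^{(n)}}}{\sum_q\sum_{r^{(q)}}\sum_{\nu^{(q)}}\omega^{r^{(q)}}_{t-1}\,p(\nu^{(q)}\mid q)\,l_{r^{(q)}\nu^{(q)}}},\qquad l_{q^{(n)}\sigma^{(n)}}=\frac{k!}{V^k}\prod_i\int p(z^t_{\sigma^{(n)}_i}\mid x)\,p_t^{q^{(n)},i-}(x)dx,$$ $k$ being the number of measurements assigned to clutter by $\sigma^{(n)}$, and the denominator summing over all cardinalities $q$, all prior $q$-target hypotheses $r^{(q)}$ and all $q$-target data associations $\nu^{(q)}$.
   Context: A multi-target (MT) pdf is a function $p(X,n)$ of a cardinality $n$ and an unordered collection $X=\{x_1,\dots,x_n\}$ of points in $\mathbb{R}^d$; $\sum_\nu$ is the sum over all permutations $\nu$ of $\{1,\dots,n\}$; the integral over $n$-element collections is $\frac{1}{n!}\int\cdot\,dx_1\cdots dx_n$. Single-target transition density $p(x\mid x')$; without birth or death the MT transition density is $p(X,n\mid X',n)=\sum_\nu\prod_{i=1}^n p(x_{\nu_i}\mid x'_i)$. Single-target likelihood $p(z\mid x)$. Given measurements $Z=\{z_1,\dots,z_m\}$, a data association hypothesis for $n$ targets is $\sigma^{(n)}=(\sigma^{(n)}_1,\dots,\sigma^{(n)}_n)$ with $\sigma^{(n)}_i\in\{z_1,\dots,z_m,\phi\}$, each measurement assigned to at most one target ($\phi$ = missed detection); the $k$ measurements not assigned to any target are clutter. Convention: $p(\phi\mid x)=1$ (so updating with $\phi$ leaves a pdf unchanged). The MT likelihood is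 $p(Z\mid X,n)=\sum_{\sigma^{(n)}}p(Z\mid\sigma^{(n)},X,n)\,p(\sigma^{(n)}\mid n)$ with $p(\sigma^{(n)}\mid n)=p_D^{m-k}(1-p_D)^{n-(m-k)}e^{-\lambda V}\frac{(\lambda V)^k}{k!}$ (detection probability $p_D$, Poisson clutter of rate $\lambda$ uniform on sensor volume $V$) and $p(Z\mid\sigma^{(n)},X,n)=\frac{k!}{V^k}\prod_{i=1}^n p(z_{\sigma^{(n)}_i}\mid x_i)$. *)

theory Defs
  imports "HOL-Probability.Probability"
begin

text \<open>An n-target state X = {x_1,...,x_n} is represented by an (ordered) tuple
  X :: nat => 'a, of which only the entries X 0, ..., X (n-1) are relevant;
  all MT quantities below are symmetric in these entries.\<close>

definition perms :: "nat \<Rightarrow> (nat \<Rightarrow> nat) set" where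
  "perms n = {\<nu>. \<nu> permutes {..<n}}"

definition mt_integral :: "nat \<Rightarrow> ((nat \<Rightarrow> 'a::euclidean_space) \<Rightarrow> real) \<Rightarrow> real" where
  "mt_integral n F = (\<integral>X. F X \<partial>(PiM {..<n} (\<lambda>_. lborel))) / fact n"

definition mt_mix :: "(nat \<Rightarrow> 'h set) \<Rightarrow> (nat \<Rightarrow> 'h \<Rightarrow> real)
      \<Rightarrow> (nat \<Rightarrow> 'h \<Rightarrow> nat \<Rightarrow> 'a \<Rightarrow> real) \<Rightarrow> nat \<Rightarrow> (nat \<Rightarrow> 'a) \<Rightarrow> real" where
  "mt_mix H w p n X = (\<Sum>q\<in>H n. w n q * (\<Sum>\<nu>\<in>perms n. \<Prod>i<n. p n q i (X (\<nu> i))))"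

text \<open>MT transition density without birth/death: p(X,n|X',n) = sum_nu prod_i p(x_{nu_i}|x'_i).
  Single-target transition density: tr x x' = p(x|x').\<close>
definition mt_trans :: "('a \<Rightarrow> 'a \<Rightarrow> real) \<Rightarrow> nat \<Rightarrow> (nat \<Rightarrow> 'a) \<Rightarrow> (nat \<Rightarrow> 'a) \<Rightarrow> real" where
  "mt_trans tr n X X' = (\<Sum>\<nu>\<in>perms n. \<Prod>i<n. tr (X (\<nu> i)) (X' i))"

definition mt_predict :: "('a::euclidean_space \<Rightarrow> 'a \<Rightarrow> real) \<Rightarrow> (nat \<Rightarrow> (nat \<Rightarrow> 'a) \<Rightarrow> real)
      \<Rightarrow> nat \<Rightarrow> (nat \<Rightarrow> 'a) \<Rightarrow> real" where
  "mt_predict tr p n X = mt_integral n (\<lambda>X'. mt_trans tr n X X' * p n X')"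

definition st_predict :: "('a::euclidean_space \<Rightarrow> 'a \<Rightarrow> real) \<Rightarrow> ('a \<Rightarrow> real) \<Rightarrow> 'a \<Rightarrow> real" where
  "st_predict tr p x = (\<integral>x'. tr x x' * p x' \<partial>lborel)"

text \<open>Data association hypotheses for n targets and measurements z_0..z_{m-1}:
  sigma i = Some j means target i is assigned measurement z_j, sigma i = None means
  missed detection (phi); each measurement is used at most once; sigma i = None for i >= n.\<close>
definition assocs :: "nat \<Rightarrow> nat \<Rightarrow> (nat \<Rightarrow> nat option) set" where
  "assocs m n = {\<sigma>. (\<forall>i. n \<le> i \<longrightarrow> \<sigma> i = None)
                  \<and> (\<forall>i<n. \<forall>j. \<sigma> i = Some j \<longrightarrow> j < m)
                  \<and> (\<forall>i<n. \<forall>i'<n. \<sigma> i = \<sigma> i' \<and> \<sigma> i \<noteq> None \<longrightarrow> i = i')}"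

definition n_clutter :: "nat \<Rightarrow> nat \<Rightarrow> (nat \<Rightarrow> nat option) \<Rightarrow> nat" where
  "n_clutter m n \<sigma> = m - card {i. i < n \<and> \<sigma> i \<noteq> None}"

definition assoc_prob :: "real \<Rightarrow> real \<Rightarrow> real \<Rightarrow> nat \<Rightarrow> nat \<Rightarrow> (nat \<Rightarrow> nat option) \<Rightarrow> real" where
  "assoc_prob pD lam V m n \<sigma> = (let k = n_clutter m n \<sigma> in
     pD ^ (m - k) * (1 - pD) ^ (n - (m - k)) * exp (- lam * V) * (lam * V) ^ k / fact k)"

text \<open>Single-target likelihood of an assignment, with the convention p(phi|x) = 1.
  g zeta x = p(zeta|x).\<close>
definition meas_lik :: "('b \<Rightarrow> 'a \<Rightarrow> real) \<Rightarrow> (nat \<Rightarrow> 'b) \<Rightarrow> nat option \<Rightarrow> 'a \<Rightarrow> real" where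
  "meas_lik g z zo x = (case zo of None \<Rightarrow> 1 | Some j \<Rightarrow> g (z j) x)"

definition assoc_lik :: "real \<Rightarrow> ('b \<Rightarrow> 'a \<Rightarrow> real) \<Rightarrow> (nat \<Rightarrow> 'b) \<Rightarrow> nat \<Rightarrow> nat
      \<Rightarrow> (nat \<Rightarrow> nat option) \<Rightarrow> (nat \<Rightarrow> 'a) \<Rightarrow> real" where
  "assoc_lik V g z m n \<sigma> X = (let k = n_clutter m n \<sigma> in
     fact k / V ^ k * (\<Prod>i<n. meas_lik g z (\<sigma> i) (X i)))"

definition mt_lik :: "real \<Rightarrow> real \<Rightarrow> real \<Rightarrow> ('b \<Rightarrow> 'a \<Rightarrow> real) \<Rightarrow> (nat \<Rightarrow> 'b) \<Rightarrow> nat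
      \<Rightarrow> nat \<Rightarrow> (nat \<Rightarrow> 'a) \<Rightarrow> real" where
  "mt_lik pD lam V g z m n X =
     (\<Sum>\<sigma>\<in>assocs m n. assoc_lik V g z m n \<sigma> X * assoc_prob pD lam V m n \<sigma>)"

definition mt_bayes :: "(nat \<Rightarrow> (nat \<Rightarrow> 'a::euclidean_space) \<Rightarrow> real)
      \<Rightarrow> (nat \<Rightarrow> (nat \<Rightarrow> 'a) \<Rightarrow> real) \<Rightarrow> nat \<Rightarrow> (nat \<Rightarrow> 'a) \<Rightarrow> real" where
  "mt_bayes lik p n X = lik n X * p n X / (\<Sum>q. mt_integral q (\<lambda>X'. lik q X' * p q X'))"

definition st_update :: "('b \<Rightarrow> 'a::euclidean_space \<Rightarrow> real) \<Rightarrow> (nat \<Rightarrow> 'b) \<Rightarrow> nat option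
      \<Rightarrow> ('a \<Rightarrow> real) \<Rightarrow> 'a \<Rightarrow> real" where
  "st_update g z zo p x = meas_lik g z zo x * p x / (\<integral>x'. meas_lik g z zo x' * p x' \<partial>lborel)"

definition assoc_lweight :: "real \<Rightarrow> ('b \<Rightarrow> 'a::euclidean_space \<Rightarrow> real) \<Rightarrow> (nat \<Rightarrow> 'b) \<Rightarrow> nat
      \<Rightarrow> nat \<Rightarrow> (nat \<Rightarrow> nat option) \<Rightarrow> (nat \<Rightarrow> 'a \<Rightarrow> real) \<Rightarrow> real" where
  "assoc_lweight V g z m n \<sigma> p = (let k = n_clutter m n \<sigma> in
     fact k / V ^ k * (\<Prod>i<n. \<integral>x. meas_lik g z (\<sigma> i) x * p i x \<partial>lborel))"

end

theory Submission
  imports Defs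
begin

text \<open>Prediction: expanding the product of the two permutation sums, each term of the MT integral
  factorises into single-target integrals p(x_{\<nu>_{\<mu>_i}} | x') p^i(x'). The double sum over \<nu> and
  \<mu> depends only on \<nu> \<circ> \<mu>, so it gives n! copies of the symmetrised product of the
  predicted components, cancelling the 1/n! of the MT integral.

  Update: relabelling the targets by a permutation \<nu> maps associations bijectively onto
  associations and preserves the clutter count, so the MT likelihood is symmetric. In the product of
  likelihood and prior, the term of each prior permutation \<nu> can therefore be written with the
  association \<sigma> aligned to \<nu>, pairing measurement z_{\<sigma>_i} with the i-th component. Normalising
  each such pair gives the single-target posteriors, their normalisers collect into l_{q\<sigma>}, and the
  same computation integrated over X yields the evidence in the denominator.\<close>

lemma card_perms: "card (perms n) = fact n"
  unfolding perms_def by (rule card_permutations) auto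

lemma sum_perms_compose:
  fixes c :: "(nat \<Rightarrow> nat) \<Rightarrow> 'a::semiring_char_0"
  shows "(\<Sum>\<nu>\<in>perms n. \<Sum>\<mu>\<in>perms n. c (\<nu> \<circ> \<mu>)) = fact n * (\<Sum>\<nu>\<in>perms n. c \<nu>)"
proof -
  have "(\<Sum>\<nu>\<in>perms n. c (\<nu> \<circ> \<mu>)) = (\<Sum>\<nu>\<in>perms n. c \<nu>)" if "\<mu> \<in> perms n" for \<mu>
    using sum_permutations_compose_right[of \<mu> "{..<n}" c] that by (simp add: perms_def)
  then have "(\<Sum>\<mu>\<in>perms n. \<Sum>\<nu>\<in>perms n. c (\<nu> \<circ> \<mu>)) = fact n * (\<Sum>\<nu>\<in>perms n. c \<nu>)"
    by (simp add: card_perms of_nat_fact)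
  then show ?thesis
    by (subst sum.swap)
qed

lemma
  fixes M :: "'a measure" and h :: "'i \<Rightarrow> 'a \<Rightarrow> real"
  assumes "sigma_finite_measure M" "finite I" "\<And>i. i \<in> I \<Longrightarrow> integrable M (h i)"
  shows integrable_prod_PiM: "integrable (PiM I (\<lambda>_. M)) (\<lambda>X. \<Prod>i\<in>I. h i (X i))"
    and integral_prod_PiM: "(\<integral>X. (\<Prod>i\<in>I. h i (X i)) \<partial>PiM I (\<lambda>_. M)) = (\<Prod>i\<in>I. integral\<^sup>L M (h i))"
proof -
  interpret product_sigma_finite "\<lambda>_::'i. M"
    using assms(1) by (simp add: product_sigma_finite_def)
  show "integrable (PiM I (\<lambda>_. M)) (\<lambda>X. \<Prod>i\<in>I. h i (X i))"
    using assms(2,3) by (rule product_integrable_prod)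
  show "(\<integral>X. (\<Prod>i\<in>I. h i (X i)) \<partial>PiM I (\<lambda>_. M)) = (\<Prod>i\<in>I. integral\<^sup>L M (h i))"
    using assms(2,3) by (rule product_integral_prod)
qed

lemma
  fixes M :: "'a measure" and a b :: "nat \<Rightarrow> 'a \<Rightarrow> real"
  assumes "sigma_finite_measure M"
    and ab_int: "\<And>i j. i < n \<Longrightarrow> j < n \<Longrightarrow> integrable M (\<lambda>x. a i x * b j x)"
  shows integrable_prod_mult_sum_perms:
      "integrable (PiM {..<n} (\<lambda>_. M)) (\<lambda>X. (\<Prod>i<n. a i (X i)) * (\<Sum>\<mu>\<in>perms n. \<Prod>i<n. b i (X (\<mu> i))))"
    and integral_prod_mult_sum_perms:
      "(\<integral>X. (\<Prod>i<n. a i (X i)) * (\<Sum>\<mu>\<in>perms n. \<Prod>i<n. b i (X (\<mu> i))) \<partial>PiM {..<n} (\<lambda>_. M))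
       = (\<Sum>\<mu>\<in>perms n. \<Prod>i<n. \<integral>x. a (\<mu> i) x * b i x \<partial>M)"
proof -
  have inv_less: "inv \<mu> i < n" if "\<mu> \<in> perms n" "i < n" for \<mu> i
    using that permutes_nat_inv_less[of \<mu> n i] by (auto simp: perms_def lessThan_atLeast0)
  have integrand: "(\<Prod>i<n. a i (X i)) * (\<Sum>\<mu>\<in>perms n. \<Prod>i<n. b i (X (\<mu> i)))
      = (\<Sum>\<mu>\<in>perms n. \<Prod>i<n. a i (X i) * b (inv \<mu> i) (X i))" for X
  proof -
    have "(\<Prod>i<n. b i (X (\<mu> i))) = (\<Prod>i<n. b (inv \<mu> i) (X i))" if "\<mu> \<in> perms n" for \<mu>
      using prod.permutes_inv[of \<mu> "{..<n}" "\<lambda>i j. b j (X i)"] that by (simp add: perms_def)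
    then show ?thesis
      by (simp add: sum_distrib_left prod.distrib)
  qed
  have term_int: "integrable (PiM {..<n} (\<lambda>_. M)) (\<lambda>X. \<Prod>i<n. a i (X i) * b (inv \<mu> i) (X i))"
    and term_eq: "(\<integral>X. (\<Prod>i<n. a i (X i) * b (inv \<mu> i) (X i)) \<partial>PiM {..<n} (\<lambda>_. M))
       = (\<Prod>i<n. \<integral>x. a i x * b (inv \<mu> i) x \<partial>M)"
    if "\<mu> \<in> perms n" for \<mu>
    using assms(1) ab_int inv_less[OF that]
    by (auto intro!: integrable_prod_PiM integral_prod_PiM)
  show "integrable (PiM {..<n} (\<lambda>_. M)) (\<lambda>X. (\<Prod>i<n. a i (X i)) * (\<Sum>\<mu>\<in>perms n. \<Prod>i<n. b i (X (\<mu> i))))"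
    unfolding integrand by (intro Bochner_Integration.integrable_sum term_int)
  have "(\<integral>X. (\<Prod>i<n. a i (X i)) * (\<Sum>\<mu>\<in>perms n. \<Prod>i<n. b i (X (\<mu> i))) \<partial>PiM {..<n} (\<lambda>_. M))
      = (\<Sum>\<mu>\<in>perms n. \<Prod>i<n. \<integral>x. a i x * b (inv \<mu> i) x \<partial>M)"
    unfolding integrand using term_int term_eq by (subst Bochner_Integration.integral_sum) auto
  also have "\<dots> = (\<Sum>\<mu>\<in>perms n. \<Prod>i<n. \<integral>x. a (\<mu> i) x * b i x \<partial>M)"
    using prod.permutes_inv[where g = "\<lambda>i j. \<integral>x. a i x * b j x \<partial>M" and S = "{..<n}"]
    by (intro sum.cong refl) (simp add: perms_def)
  finally show "(\<integral>X. (\<Prod>i<n. a i (X i)) * (\<Sum>\<mu>\<in>perms n. \<Prod>i<n. b i (X (\<mu> i))) \<partial>PiM {..<n} (\<lambda>_. M))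
       = (\<Sum>\<mu>\<in>perms n. \<Prod>i<n. \<integral>x. a (\<mu> i) x * b i x \<partial>M)" .
qed

lemma mt_predict_mt_mix:
  fixes f :: "nat \<Rightarrow> 'h \<Rightarrow> nat \<Rightarrow> 'a::euclidean_space \<Rightarrow> real"
  assumes pred_int: "\<And>q i x. q \<in> H n \<Longrightarrow> i < n \<Longrightarrow> integrable lborel (\<lambda>x'. tr x x' * f n q i x')"
  shows "mt_predict tr (mt_mix H w f) n X = mt_mix H w (\<lambda>n q i. st_predict tr (f n q i)) n X"
proof -
  let ?P = "\<lambda>q i. st_predict tr (f n q i)"
  let ?T = "\<lambda>\<nu> X'. \<Prod>i<n. tr (X (\<nu> i)) (X' i)"
  define S where "S q X' = (\<Sum>\<mu>\<in>perms n. \<Prod>i<n. f n q i (X' (\<mu> i)))" for q X'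
  have expand: "mt_trans tr n X X' * mt_mix H w f n X' = (\<Sum>\<nu>\<in>perms n. \<Sum>q\<in>H n. w n q * (?T \<nu> X' * S q X'))"
    for X'
  proof -
    have "mt_mix H w f n X' = (\<Sum>q\<in>H n. w n q * S q X')"
      by (simp add: mt_mix_def S_def)
    then show ?thesis
      unfolding mt_trans_def by (simp add: sum_distrib_left sum_distrib_right mult_ac)
  qed
  have "integrable (PiM {..<n} (\<lambda>_. lborel)) (\<lambda>X'. ?T \<nu> X' * S q X')"
    and "(\<integral>X'. ?T \<nu> X' * S q X' \<partial>PiM {..<n} (\<lambda>_. lborel)) = (\<Sum>\<mu>\<in>perms n. \<Prod>i<n. ?P q i (X (\<nu> (\<mu> i))))"
    if "q \<in> H n" for \<nu> q
    using pred_int[OF that] unfolding S_def st_predict_def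
    by (auto intro!: integrable_prod_mult_sum_perms integral_prod_mult_sum_perms[where a = "\<lambda>i. tr (X (\<nu> i))"]
        lborel.sigma_finite_measure_axioms)
  then have "(\<integral>X'. mt_trans tr n X X' * mt_mix H w f n X' \<partial>PiM {..<n} (\<lambda>_. lborel))
      = (\<Sum>\<nu>\<in>perms n. \<Sum>q\<in>H n. w n q * (\<Sum>\<mu>\<in>perms n. \<Prod>i<n. ?P q i (X (\<nu> (\<mu> i)))))"
    unfolding expand by (simp add: Bochner_Integration.integral_sum Bochner_Integration.integrable_sum)
  also have "\<dots> = (\<Sum>q\<in>H n. w n q * (\<Sum>\<nu>\<in>perms n. \<Sum>\<mu>\<in>perms n. \<Prod>i<n. ?P q i (X ((\<nu> \<circ> \<mu>) i))))"
    by (subst sum.swap) (simp add: sum_distrib_left)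
  also have "\<dots> = (\<Sum>q\<in>H n. w n q * (fact n * (\<Sum>\<nu>\<in>perms n. \<Prod>i<n. ?P q i (X (\<nu> i)))))"
    by (intro sum.cong refl) (simp only: sum_perms_compose[where c = "\<lambda>\<nu>. \<Prod>i<n. ?P _ i (X (\<nu> i))"])
  also have "\<dots> = fact n * mt_mix H w (\<lambda>n q i. st_predict tr (f n q i)) n X"
    by (simp add: mt_mix_def sum_distrib_left mult_ac)
  finally show ?thesis
    unfolding mt_predict_def mt_integral_def by simp
qed

lemma
  fixes tr :: "'a::euclidean_space \<Rightarrow> 'a \<Rightarrow> real" and f :: "'a \<Rightarrow> real"
  assumes f_meas: "f \<in> borel_measurable lborel"
    and f_nonneg: "\<And>x. 0 \<le> f x"
    and f_int: "integrable lborel f"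
    and f_one: "(\<integral>x. f x \<partial>lborel) = 1"
    and tr_meas: "(\<lambda>(x, x'). tr x x') \<in> borel_measurable (lborel \<Otimes>\<^sub>M lborel)"
    and tr_nonneg: "\<And>x x'. 0 \<le> tr x x'"
    and tr_int: "\<And>x'. integrable lborel (\<lambda>x. tr x x')"
    and tr_one: "\<And>x'. (\<integral>x. tr x x' \<partial>lborel) = 1"
    and pred_int: "\<And>x. integrable lborel (\<lambda>x'. tr x x' * f x')"
  shows integrable_st_predict: "integrable lborel (st_predict tr f)"
    and integral_st_predict: "(\<integral>x. st_predict tr f x \<partial>lborel) = 1"
proof -
  have joint_meas: "(\<lambda>(x, x'). tr x x' * f x') \<in> borel_measurable (lborel \<Otimes>\<^sub>M lborel)"
    using tr_meas f_meas by measurable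
  have tr_meas': "(\<lambda>x. tr x x') \<in> borel_measurable lborel" for x'
    using tr_meas by measurable
  have pred_meas: "st_predict tr f \<in> borel_measurable lborel"
    unfolding st_predict_def
    by (rule lborel.borel_measurable_lebesgue_integral) (use joint_meas in simp)
  have pred_nonneg: "0 \<le> st_predict tr f x" for x
    unfolding st_predict_def by (simp add: tr_nonneg f_nonneg)
  have "(\<integral>\<^sup>+x. ennreal (st_predict tr f x) \<partial>lborel)
      = (\<integral>\<^sup>+x. (\<integral>\<^sup>+x'. ennreal (tr x x' * f x') \<partial>lborel) \<partial>lborel)"
    unfolding st_predict_def
    by (intro nn_integral_cong nn_integral_eq_integral[symmetric]) (simp_all add: pred_int tr_nonneg f_nonneg)
  also have "\<dots> = (\<integral>\<^sup>+x'. (\<integral>\<^sup>+x. ennreal (tr x x' * f x') \<partial>lborel) \<partial>lborel)"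
    using joint_meas by (intro lborel_pair.Fubini'[symmetric]) (simp add: split_beta')
  also have "\<dots> = (\<integral>\<^sup>+x'. (\<integral>\<^sup>+x. ennreal (tr x x') \<partial>lborel) * ennreal (f x') \<partial>lborel)"
    using tr_meas' by (intro nn_integral_cong) (simp add: ennreal_mult tr_nonneg f_nonneg nn_integral_multc)
  also have "\<dots> = (\<integral>\<^sup>+x'. ennreal (f x') \<partial>lborel)"
    using tr_int tr_nonneg tr_one by (simp add: nn_integral_eq_integral)
  also have "\<dots> = 1"
    using f_int f_nonneg f_one by (simp add: nn_integral_eq_integral)
  finally have pred_nn_one: "(\<integral>\<^sup>+x. ennreal (st_predict tr f x) \<partial>lborel) = 1" .
  show "integrable lborel (st_predict tr f)"
    using pred_meas pred_nonneg pred_nn_one by (intro integrableI_nonneg) auto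
  show "(\<integral>x. st_predict tr f x \<partial>lborel) = 1"
    using pred_meas pred_nonneg pred_nn_one by (subst integral_eq_nn_integral) auto
qed

lemma assocs_Some_less: "\<sigma> \<in> assocs m n \<Longrightarrow> \<sigma> i = Some j \<Longrightarrow> j < m"
  unfolding assocs_def by (cases "i < n") auto

lemma comp_permutes_in_assocs:
  assumes \<sigma>: "\<sigma> \<in> assocs m n" and \<nu>: "\<nu> permutes {..<n}"
  shows "\<sigma> \<circ> \<nu> \<in> assocs m n"
proof -
  have fixed: "\<nu> i = i" if "n \<le> i" for i
    using \<nu> that unfolding permutes_def by auto
  have range: "\<nu> i < n" if "i < n" for i
    using permutes_in_image[OF \<nu>] that by auto
  have inj_used: "i = i'" if "i < n" "i' < n" "\<sigma> (\<nu> i) = \<sigma> (\<nu> i')" "\<sigma> (\<nu> i) \<noteq> None" for i i'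
  proof -
    have "\<nu> i = \<nu> i'"
      using \<sigma> that range unfolding assocs_def by blast
    then show ?thesis
      using permutes_inj[OF \<nu>] by (simp add: inj_eq)
  qed
  show ?thesis
    unfolding assocs_def
  proof (intro CollectI conjI allI impI)
    show "(\<sigma> \<circ> \<nu>) i = None" if "n \<le> i" for i
      using \<sigma> fixed[OF that] that unfolding assocs_def by simp
    show "j < m" if "(\<sigma> \<circ> \<nu>) i = Some j" for i j
      using assocs_Some_less[OF \<sigma>] that by simp
    show "i = i'" if "i < n" "i' < n" "(\<sigma> \<circ> \<nu>) i = (\<sigma> \<circ> \<nu>) i' \<and> (\<sigma> \<circ> \<nu>) i \<noteq> None" for i i'
      using inj_used that by (metis comp_apply)
  qed
qed

lemma n_clutter_comp_permutes:
  assumes \<nu>: "\<nu> permutes {..<n}"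
  shows "n_clutter m n (\<sigma> \<circ> \<nu>) = n_clutter m n \<sigma>"
proof -
  have "{j. j < n \<and> \<sigma> j \<noteq> None} = \<nu> ` {i. i < n \<and> (\<sigma> \<circ> \<nu>) i \<noteq> None}"
  proof (intro equalityI subsetI)
    fix j assume "j \<in> {j. j < n \<and> \<sigma> j \<noteq> None}"
    moreover have "inv \<nu> j < n \<longleftrightarrow> j < n"
      using permutes_in_image[OF permutes_inv[OF \<nu>]] by simp
    ultimately show "j \<in> \<nu> ` {i. i < n \<and> (\<sigma> \<circ> \<nu>) i \<noteq> None}"
      by (auto simp: permutes_inverses[OF \<nu>] intro!: image_eqI[where x = "inv \<nu> j"])
  qed (use permutes_in_image[OF \<nu>] in auto)
  then show ?thesis
    unfolding n_clutter_def using permutes_inj[OF \<nu>]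
    by (simp add: card_image inj_on_subset)
qed

lemma sum_assocs_comp_permutes:
  assumes \<nu>: "\<nu> permutes {..<n}"
  shows "(\<Sum>\<sigma>\<in>assocs m n. F (\<sigma> \<circ> \<nu>)) = (\<Sum>\<sigma>\<in>assocs m n. F \<sigma>)"
proof (rule sum.reindex_bij_betw)
  show "bij_betw (\<lambda>\<sigma>. \<sigma> \<circ> \<nu>) (assocs m n) (assocs m n)"
  proof (rule bij_betwI[where g = "\<lambda>\<sigma>. \<sigma> \<circ> inv \<nu>"])
    show "(\<lambda>\<sigma>. \<sigma> \<circ> \<nu>) \<in> assocs m n \<rightarrow> assocs m n"
      using \<nu> by (auto intro: comp_permutes_in_assocs)
    show "(\<lambda>\<sigma>. \<sigma> \<circ> inv \<nu>) \<in> assocs m n \<rightarrow> assocs m n"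
      using permutes_inv[OF \<nu>] by (auto intro: comp_permutes_in_assocs)
  qed (simp_all add: fun_eq_iff permutes_inverses[OF \<nu>])
qed

text \<open>The factor of p(Z|\<sigma>,X,n) p(\<sigma>|n) that does not depend on X.\<close>

definition assoc_const :: "real \<Rightarrow> real \<Rightarrow> real \<Rightarrow> nat \<Rightarrow> nat \<Rightarrow> (nat \<Rightarrow> nat option) \<Rightarrow> real" where
  "assoc_const pD lam V m n \<sigma> =
     fact (n_clutter m n \<sigma>) / V ^ n_clutter m n \<sigma> * assoc_prob pD lam V m n \<sigma>"

lemma sum_assoc_const_comp_permutes:
  assumes \<nu>: "\<nu> permutes {..<n}"
  shows "(\<Sum>\<sigma>\<in>assocs m n. assoc_const pD lam V m n \<sigma> * F (\<sigma> \<circ> \<nu>))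
       = (\<Sum>\<sigma>\<in>assocs m n. assoc_const pD lam V m n \<sigma> * F \<sigma>)"
proof -
  have "assoc_const pD lam V m n (\<sigma> \<circ> \<nu>) = assoc_const pD lam V m n \<sigma>" for \<sigma>
    by (simp add: assoc_const_def assoc_prob_def n_clutter_comp_permutes[OF \<nu>])
  then show ?thesis
    using sum_assocs_comp_permutes[OF \<nu>, where F = "\<lambda>\<sigma>. assoc_const pD lam V m n \<sigma> * F \<sigma>"]
    by simp
qed

lemma mt_lik_eq:
  "mt_lik pD lam V g z m n X
     = (\<Sum>\<sigma>\<in>assocs m n. assoc_const pD lam V m n \<sigma> * (\<Prod>i<n. meas_lik g z (\<sigma> i) (X i)))"
  by (simp add: mt_lik_def assoc_lik_def assoc_const_def Let_def mult_ac)

lemma mt_lik_comp_permutes: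
  assumes \<nu>: "\<nu> permutes {..<n}"
  shows "mt_lik pD lam V g z m n (X \<circ> \<nu>) = mt_lik pD lam V g z m n X"
proof -
  have "(\<Prod>i<n. meas_lik g z (\<sigma> i) (X (\<nu> i))) = (\<Prod>i<n. meas_lik g z ((\<sigma> \<circ> inv \<nu>) i) (X i))" for \<sigma>
    using prod.permutes_inv[OF \<nu>, where g = "\<lambda>j i. meas_lik g z (\<sigma> i) (X j)"] by simp
  then show ?thesis
    unfolding mt_lik_eq
    using sum_assoc_const_comp_permutes[OF permutes_inv[OF \<nu>],
        where F = "\<lambda>\<sigma>. \<Prod>i<n. meas_lik g z (\<sigma> i) (X i)"]
    by simp
qed

lemma assoc_prob_mult_assoc_lweight:
  "assoc_prob pD lam V m n \<sigma> * assoc_lweight V g z m n \<sigma> p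
     = assoc_const pD lam V m n \<sigma> * (\<Prod>i<n. \<integral>x. meas_lik g z (\<sigma> i) x * p i x \<partial>lborel)"
  by (simp add: assoc_lweight_def assoc_const_def Let_def mult_ac)

lemma mt_lik_mult_mt_mix:
  "mt_lik pD lam V g z m n X * mt_mix H w p n X
     = (\<Sum>q\<in>H n. \<Sum>\<sigma>\<in>assocs m n. \<Sum>\<nu>\<in>perms n. assoc_const pD lam V m n \<sigma> * w n q *
          (\<Prod>i<n. meas_lik g z (\<sigma> i) (X (\<nu> i)) * p n q i (X (\<nu> i))))"
proof -
  have "mt_lik pD lam V g z m n X * mt_mix H w p n X
      = (\<Sum>q\<in>H n. \<Sum>\<nu>\<in>perms n. w n q * (mt_lik pD lam V g z m n (X \<circ> \<nu>) * (\<Prod>i<n. p n q i (X (\<nu> i)))))"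
    unfolding mt_mix_def sum_distrib_left
    by (intro sum.cong refl) (simp add: perms_def mt_lik_comp_permutes mult_ac)
  also have "\<dots> = (\<Sum>q\<in>H n. \<Sum>\<nu>\<in>perms n. \<Sum>\<sigma>\<in>assocs m n. assoc_const pD lam V m n \<sigma> * w n q *
          (\<Prod>i<n. meas_lik g z (\<sigma> i) (X (\<nu> i)) * p n q i (X (\<nu> i))))"
    by (simp add: mt_lik_eq sum_distrib_left sum_distrib_right prod.distrib mult_ac)
  also have "\<dots> = (\<Sum>q\<in>H n. \<Sum>\<sigma>\<in>assocs m n. \<Sum>\<nu>\<in>perms n. assoc_const pD lam V m n \<sigma> * w n q *
          (\<Prod>i<n. meas_lik g z (\<sigma> i) (X (\<nu> i)) * p n q i (X (\<nu> i))))"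
    by (intro sum.cong refl sum.swap)
  finally show ?thesis .
qed

lemma integrable_meas_lik_mult:
  assumes "\<sigma> \<in> assocs m n" "integrable M p" "\<And>j. j < m \<Longrightarrow> integrable M (\<lambda>x. g (z j) x * p x)"
  shows "integrable M (\<lambda>x. meas_lik g z (\<sigma> i) x * p x)"
  using assms assocs_Some_less[OF assms(1)] by (cases "\<sigma> i") (auto simp: meas_lik_def)

lemma integral_meas_lik_mult_nonzero:
  assumes "\<sigma> \<in> assocs m n" "integral\<^sup>L M p \<noteq> 0" "\<And>j. j < m \<Longrightarrow> (\<integral>x. g (z j) x * p x \<partial>M) \<noteq> 0"
  shows "(\<integral>x. meas_lik g z (\<sigma> i) x * p x \<partial>M) \<noteq> 0"
  using assms assocs_Some_less[OF assms(1)] by (cases "\<sigma> i") (auto simp: meas_lik_def)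

lemma mt_integral_mt_lik_mult_mt_mix:
  fixes p :: "nat \<Rightarrow> 'h \<Rightarrow> nat \<Rightarrow> 'a::euclidean_space \<Rightarrow> real"
  assumes p_int: "\<And>q i. q \<in> H n \<Longrightarrow> i < n \<Longrightarrow> integrable lborel (p n q i)"
    and gp_int: "\<And>q i j. q \<in> H n \<Longrightarrow> i < n \<Longrightarrow> j < m \<Longrightarrow> integrable lborel (\<lambda>x. g (z j) x * p n q i x)"
  shows "mt_integral n (\<lambda>X. mt_lik pD lam V g z m n X * mt_mix H w p n X)
       = (\<Sum>q\<in>H n. \<Sum>\<sigma>\<in>assocs m n.
            w n q * assoc_prob pD lam V m n \<sigma> * assoc_lweight V g z m n \<sigma> (p n q))"
proof -
  let ?c = "assoc_const pD lam V m n"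
  define L where "L \<sigma> X = (\<Prod>i<n. meas_lik g z (\<sigma> i) (X i))" for \<sigma> X
  define S where "S q X = (\<Sum>\<mu>\<in>perms n. \<Prod>i<n. p n q i (X (\<mu> i)))" for q X
  define h where "h q \<sigma> = (\<Prod>i<n. \<integral>x. meas_lik g z (\<sigma> i) x * p n q i x \<partial>lborel)" for q \<sigma>
  have expand: "mt_lik pD lam V g z m n X * mt_mix H w p n X
      = (\<Sum>\<sigma>\<in>assocs m n. \<Sum>q\<in>H n. ?c \<sigma> * w n q * (L \<sigma> X * S q X))" for X
  proof -
    have "mt_mix H w p n X = (\<Sum>q\<in>H n. w n q * S q X)"
      by (simp add: mt_mix_def S_def)
    then show ?thesis
      by (simp add: mt_lik_eq L_def sum_distrib_left sum_distrib_right mult_ac)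
  qed
  have Lp_int: "integrable lborel (\<lambda>x. meas_lik g z (\<sigma> i) x * p n q j x)"
    if "\<sigma> \<in> assocs m n" "q \<in> H n" "j < n" for \<sigma> q i j
    using integrable_meas_lik_mult[where g = g and z = z, OF that(1) p_int[OF that(2,3)] gp_int[OF that(2,3)]] .
  have "integrable (PiM {..<n} (\<lambda>_. lborel)) (\<lambda>X. L \<sigma> X * S q X)"
    and "(\<integral>X. L \<sigma> X * S q X \<partial>PiM {..<n} (\<lambda>_. lborel)) = (\<Sum>\<mu>\<in>perms n. h q (\<sigma> \<circ> \<mu>))"
    if "\<sigma> \<in> assocs m n" "q \<in> H n" for \<sigma> q
    using Lp_int[OF that]
    unfolding L_def S_def h_def
    by (auto intro!: integrable_prod_mult_sum_perms integral_prod_mult_sum_perms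
        lborel.sigma_finite_measure_axioms)
  then have "(\<integral>X. mt_lik pD lam V g z m n X * mt_mix H w p n X \<partial>PiM {..<n} (\<lambda>_. lborel))
      = (\<Sum>\<sigma>\<in>assocs m n. \<Sum>q\<in>H n. ?c \<sigma> * w n q * (\<Sum>\<mu>\<in>perms n. h q (\<sigma> \<circ> \<mu>)))"
    unfolding expand by (simp add: Bochner_Integration.integral_sum integrable_sum)
  also have "\<dots> = (\<Sum>q\<in>H n. w n q * (\<Sum>\<mu>\<in>perms n. \<Sum>\<sigma>\<in>assocs m n. ?c \<sigma> * h q (\<sigma> \<circ> \<mu>)))"
    by (subst sum.swap) (simp add: sum_distrib_left sum.swap[of _ "assocs m n"] mult_ac)
  also have "\<dots> = (\<Sum>q\<in>H n. w n q * (\<Sum>\<mu>\<in>perms n. \<Sum>\<sigma>\<in>assocs m n. ?c \<sigma> * h q \<sigma>))"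
    by (simp add: perms_def sum_assoc_const_comp_permutes)
  also have "\<dots> = fact n * (\<Sum>q\<in>H n. \<Sum>\<sigma>\<in>assocs m n.
            w n q * assoc_prob pD lam V m n \<sigma> * assoc_lweight V g z m n \<sigma> (p n q))"
    by (simp add: card_perms h_def assoc_prob_mult_assoc_lweight sum_distrib_left mult_ac)
  finally show ?thesis
    unfolding mt_integral_def by simp
qed

lemma mt_bayes_mt_mix:
  fixes p :: "nat \<Rightarrow> 'h \<Rightarrow> nat \<Rightarrow> 'a::euclidean_space \<Rightarrow> real"
  assumes p_int: "\<And>n q i. q \<in> H n \<Longrightarrow> i < n \<Longrightarrow> integrable lborel (p n q i)"
    and p_nonzero: "\<And>n q i. q \<in> H n \<Longrightarrow> i < n \<Longrightarrow> (\<integral>x. p n q i x \<partial>lborel) \<noteq> 0"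
    and gp_int: "\<And>n q i j. q \<in> H n \<Longrightarrow> i < n \<Longrightarrow> j < m \<Longrightarrow>
        integrable lborel (\<lambda>x. g (z j) x * p n q i x)"
    and gp_nonzero: "\<And>n q i j. q \<in> H n \<Longrightarrow> i < n \<Longrightarrow> j < m \<Longrightarrow>
        (\<integral>x. g (z j) x * p n q i x \<partial>lborel) \<noteq> 0"
  shows "mt_bayes (mt_lik pD lam V g z m) (mt_mix H w p) n X
       = (\<Sum>q\<in>H n. \<Sum>\<sigma>\<in>assocs m n.
            (w n q * assoc_prob pD lam V m n \<sigma> * assoc_lweight V g z m n \<sigma> (p n q)
             / (\<Sum>n'. \<Sum>r\<in>H n'. \<Sum>\<nu>\<in>assocs m n'.
                  w n' r * assoc_prob pD lam V m n' \<nu> * assoc_lweight V g z m n' \<nu> (p n' r)))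
            * (\<Sum>\<nu>\<in>perms n. \<Prod>i<n. st_update g z (\<sigma> i) (p n q i) (X (\<nu> i))))"
proof -
  define D where "D = (\<Sum>n'. \<Sum>r\<in>H n'. \<Sum>\<nu>\<in>assocs m n'.
      w n' r * assoc_prob pD lam V m n' \<nu> * assoc_lweight V g z m n' \<nu> (p n' r))"
  let ?c = "assoc_const pD lam V m n"
  let ?A = "\<lambda>q \<sigma> \<nu>. \<Prod>i<n. meas_lik g z (\<sigma> i) (X (\<nu> i)) * p n q i (X (\<nu> i))"
  have evidence: "(\<Sum>n'. mt_integral n' (\<lambda>X. mt_lik pD lam V g z m n' X * mt_mix H w p n' X)) = D"
    unfolding D_def using mt_integral_mt_lik_mult_mt_mix[where g = g and z = z and p = p, OF p_int gp_int] by simp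
  have component: "(w n q * assoc_prob pD lam V m n \<sigma> * assoc_lweight V g z m n \<sigma> (p n q) / D)
        * (\<Sum>\<nu>\<in>perms n. \<Prod>i<n. st_update g z (\<sigma> i) (p n q i) (X (\<nu> i)))
      = (\<Sum>\<nu>\<in>perms n. ?c \<sigma> * w n q * ?A q \<sigma> \<nu>) / D"
    if "q \<in> H n" "\<sigma> \<in> assocs m n" for q \<sigma>
  proof -
    define h where "h = (\<Prod>i<n. \<integral>x. meas_lik g z (\<sigma> i) x * p n q i x \<partial>lborel)"
    have "h \<noteq> 0"
      unfolding h_def
      using integral_meas_lik_mult_nonzero[where g = g and z = z, OF that(2) p_nonzero gp_nonzero] that(1)
      by (simp add: prod_zero_iff)
    have st: "(\<Sum>\<nu>\<in>perms n. \<Prod>i<n. st_update g z (\<sigma> i) (p n q i) (X (\<nu> i)))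
        = (\<Sum>\<nu>\<in>perms n. ?A q \<sigma> \<nu>) / h"
      by (simp add: st_update_def h_def prod_dividef sum_divide_distrib)
    have weight: "w n q * assoc_prob pD lam V m n \<sigma> * assoc_lweight V g z m n \<sigma> (p n q)
        = w n q * ?c \<sigma> * h"
      by (simp add: mult.assoc assoc_prob_mult_assoc_lweight h_def)
    have cancel: "(w n q * ?c \<sigma> * h / D) * (S / h) = ?c \<sigma> * w n q * S / D" for S
      using \<open>h \<noteq> 0\<close> by (cases "D = 0") (simp_all add: field_simps)
    show ?thesis
      unfolding st weight cancel sum_distrib_left ..
  qed
  have "mt_bayes (mt_lik pD lam V g z m) (mt_mix H w p) n X
      = (\<Sum>q\<in>H n. \<Sum>\<sigma>\<in>assocs m n. (\<Sum>\<nu>\<in>perms n. ?c \<sigma> * w n q * ?A q \<sigma> \<nu>) / D)"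
    unfolding mt_bayes_def evidence unfolding mt_lik_mult_mt_mix by (simp add: sum_divide_distrib)
  also have "\<dots> = (\<Sum>q\<in>H n. \<Sum>\<sigma>\<in>assocs m n. (w n q * assoc_prob pD lam V m n \<sigma>
        * assoc_lweight V g z m n \<sigma> (p n q) / D)
        * (\<Sum>\<nu>\<in>perms n. \<Prod>i<n. st_update g z (\<sigma> i) (p n q i) (X (\<nu> i))))"
    by (intro sum.cong refl) (simp only: component)
  finally show ?thesis
    unfolding D_def .
qed

theorem proposition3:
  fixes H :: "nat \<Rightarrow> 'h set"
    and w :: "nat \<Rightarrow> 'h \<Rightarrow> real"
    and f :: "nat \<Rightarrow> 'h \<Rightarrow> nat \<Rightarrow> 'a::euclidean_space \<Rightarrow> real"
    and tr :: "'a \<Rightarrow> 'a \<Rightarrow> real"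
    and g :: "'b \<Rightarrow> 'a \<Rightarrow> real"
    and z :: "nat \<Rightarrow> 'b"
    and m :: nat
    and pD lam V :: real
  assumes H_fin: "\<And>n. finite (H n)"
    and w_nonneg: "\<And>n q. q \<in> H n \<Longrightarrow> 0 \<le> w n q"
    and w_sums: "(\<lambda>n. \<Sum>q\<in>H n. w n q) sums 1"
    and f_meas: "\<And>n q i. f n q i \<in> borel_measurable lborel"
    and f_nonneg: "\<And>n q i x. 0 \<le> f n q i x"
    and f_int: "\<And>n q i. integrable lborel (f n q i)"
    and f_one: "\<And>n q i. (\<integral>x. f n q i x \<partial>lborel) = 1"
    and tr_meas: "(\<lambda>(x, x'). tr x x') \<in> borel_measurable (lborel \<Otimes>\<^sub>M lborel)"
    and tr_nonneg: "\<And>x x'. 0 \<le> tr x x'"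
    and tr_int: "\<And>x'. integrable lborel (\<lambda>x. tr x x')"
    and tr_one: "\<And>x'. (\<integral>x. tr x x' \<partial>lborel) = 1"
    and pred_int: "\<And>n q i x. integrable lborel (\<lambda>x'. tr x x' * f n q i x')"
    and g_meas: "\<And>\<zeta>. g \<zeta> \<in> borel_measurable lborel"
    and g_nonneg: "\<And>\<zeta> x. 0 \<le> g \<zeta> x"
    and upd_int: "\<And>n q i j. q \<in> H n \<Longrightarrow> i < n \<Longrightarrow> j < m \<Longrightarrow>
        integrable lborel (\<lambda>x. g (z j) x * st_predict tr (f n q i) x)"
    and upd_pos: "\<And>n q i j. q \<in> H n \<Longrightarrow> i < n \<Longrightarrow> j < m \<Longrightarrow>
        0 < (\<integral>x. g (z j) x * st_predict tr (f n q i) x \<partial>lborel)"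
    and pD: "0 \<le> pD" "pD \<le> 1"
    and lam: "0 < lam"
    and V: "0 < V"
  shows
    "(\<forall>n X. mt_predict tr (mt_mix H w f) n X
            = mt_mix H w (\<lambda>n q i. st_predict tr (f n q i)) n X)
     \<and> (\<forall>n X. mt_bayes (mt_lik pD lam V g z m) (mt_predict tr (mt_mix H w f)) n X
            = (\<Sum>q\<in>H n. \<Sum>\<sigma>\<in>assocs m n.
                 (w n q * assoc_prob pD lam V m n \<sigma>
                    * assoc_lweight V g z m n \<sigma> (\<lambda>i. st_predict tr (f n q i))
                  / (\<Sum>n'. \<Sum>r\<in>H n'. \<Sum>\<nu>\<in>assocs m n'.
                       w n' r * assoc_prob pD lam V m n' \<nu>
                         * assoc_lweight V g z m n' \<nu> (\<lambda>i. st_predict tr (f n' r i))))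
                 * (\<Sum>\<nu>\<in>perms n. \<Prod>i<n.
                      st_update g z (\<sigma> i) (st_predict tr (f n q i)) (X (\<nu> i)))))"
proof -
  \<comment> \<open>The hypotheses on w, g, pD, lam and V make the objects genuine densities and probabilities,
    but the two identities hold without them.\<close>
  let ?P = "\<lambda>n q i. st_predict tr (f n q i)"
  note predict_pdf = f_meas f_nonneg f_int f_one tr_meas tr_nonneg tr_int tr_one pred_int
  have P_int: "integrable lborel (?P n q i)" for n q i
    by (rule integrable_st_predict[OF predict_pdf])
  have P_nonzero: "(\<integral>x. ?P n q i x \<partial>lborel) \<noteq> 0" for n q i
    by (simp add: integral_st_predict[OF predict_pdf])
  have upd_nonzero: "(\<integral>x. g (z j) x * ?P n q i x \<partial>lborel) \<noteq> 0" if "q \<in> H n" "i < n" "j < m" for n q i j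
    using upd_pos[OF that] by simp
  have prediction: "mt_predict tr (mt_mix H w f) = mt_mix H w ?P"
    by (intro ext mt_predict_mt_mix pred_int)
  show ?thesis
    unfolding prediction
    using mt_bayes_mt_mix[where g = g and z = z and p = ?P, OF P_int P_nonzero upd_int upd_nonzero]
    by simp
qed

end
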